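(* Consider the o-ACOPF and SOC-ACOPF models described in the context, and assume $(\theta^{\min}_l,\theta^{\max}_l)\subseteq(-\tfrac{\pi}{2},\tfrac{\pi}{2})$ and $\theta^{\min}_l=-\theta^{\max}_l$ for all $l\in\mathcal L$. Let $\Omega_1$ be a (optimal) solution of the SOC-ACOPF model, and recover (map) from it a point of the o-ACOPF model by keeping all variables other than $\theta_l$, setting $v_n:=\sqrt{V_n}$ for all $n$, and $\theta^{\mathrm{rec}}_l:=\arcsin\!\big(\tfrac{X_lp_{s_l}-R_lq_{s_l}}{v_{s_l}v_{r_l}}\big)=\arcsin\!\big(\tfrac{\theta_l}{v_{s_l}v_{r_l}}\big)$ for all $l$. A necessary condition for this recovered point to be a feasible solution of the o-ACOPF model is $$V_{s_l}V_{r_l}\sin^2(\theta^{\max}_l)\ge\theta_l^2\quad\forall l\in\mathcal L,$$ which is a conic (hence convex) constraint.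
   Context: Power network: finite node set $\mathcal N$, branch set $\mathcal L$; each branch $l$ has a sending-end node $s_l$ and a receiving-end node $r_l$, and for a nodal quantity $x$ we write $x_{s_l},x_{r_l}$ for its values at these nodes. Incidence coefficients: $A^+_{nl}=1,A^-_{nl}=0$ if $n=s_l$; $A^+_{nl}=-1,A^-_{nl}=-1$ if $n=r_l$; $A^{\pm}_{nl}=0$ otherwise. Parameters: branch ($\Pi$-model) resistance $R_l$, reactance $X_l$, end shunt susceptances $B_{s_l},B_{r_l}$, ampacity $\widetilde K_l$; nodal shunt conductance/susceptance $G_n,B_n$; loads $p_{d_n},q_{d_n}$; bounds $v^{\min}_n,v^{\max}_n,\theta^{\min}_l,\theta^{\max}_l,\theta^{\min}_n,\theta^{\max}_n,p^{\min}_n,p^{\max}_n,q^{\min}_n,q^{\max}_n$. The objective $f$ is convex. o-ACOPF model: minimize $f$ over variables $p_n,q_n,V_n,v_n,\theta_n$ ($n\in\mathcal N$), $p_{s_l},q_{s_l},p_{o_l},q_{o_l},\theta_l$ ($l\in\mathcal L$) subject to, for all $n,l$: (A) $p_n-p_{d_n}=\sum_l(A^+_{nl}p_{s_l}-A^-_{nl}p_{o_l})+G_nV_n$, $q_n-q_{d_n}=\sum_l(A^+_{nl}q_{s_l}-A^-_{nl}q_{o_l})-B_nV_n$; (B) $V_{s_l}-V_{r_l}=2R_lp_{s_l}+2X_lq_{s_l}-R_lp_{o_l}-X_lq_{o_l}$; (C) $v_{s_l}v_{r_l}\sin\theta_l=X_lp_{s_l}-R_lq_{s_l}$; (D) for $e\in\{s,r\}$: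 $\big(p_{e_l}^2+(q_{e_l}-V_{e_l}B_{e_l})^2\big)/V_{e_l}\le\widetilde K_l$, where $p_{r_l}:=p_{s_l}-p_{o_l}$, $q_{r_l}:=q_{s_l}-q_{o_l}$; (E) $V_n=v_n^2$; (F) $\theta_l=\theta_{s_l}-\theta_{r_l}$; (G) $p_{o_l}=\frac{p_{s_l}^2+q_{s_l}^2}{V_{s_l}}R_l$, $q_{o_l}=\frac{p_{s_l}^2+q_{s_l}^2}{V_{s_l}}X_l$; (H) $v_n\in(v^{\min}_n,v^{\max}_n)$, $\theta_l\in(\theta^{\min}_l,\theta^{\max}_l)$, $\theta_n\in(\theta^{\min}_n,\theta^{\max}_n)$, $p_n\in(p^{\min}_n,p^{\max}_n)$, $q_n\in(q^{\min}_n,q^{\max}_n)$. SOC-ACOPF model: minimize $f$ over variables $p_n,q_n,V_n,\theta_n$, $p_{s_l},q_{s_l},p_{o_l},q_{o_l},\theta_l$ subject to (A), (B), (F), the bounds in (H) on $\theta_l,\theta_n,p_n,q_n$, $V_n\in((v^{\min}_n)^2,(v^{\max}_n)^2)$, and for all $l$ and $e\in\{s,r\}$ (with $p_{r_l},q_{r_l}$ as in (D)): $K^e_{o_l}\ge q_{o_l}\ge\frac{p_{e_l}^2+q_{e_l}^2}{V_{e_l}}X_l$ where $K^e_{o_l}=(\widetilde K_l-V_{e_l}B_{e_l}^2+2q_{e_l}B_{e_l})X_l$; $p_{o_l}X_l=q_{o_l}R_l$; $\theta_l=X_lp_{s_l}-R_lq_{s_l}$. A feasible solution satisfies all constraints of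 the model. *)

theory Defs
  imports Complex_Main
begin

record ('n, 'l) network =
  nodes   :: "'n set"
  branches :: "'l set"
  snd_node :: "'l \<Rightarrow> 'n"
  rcv_node :: "'l \<Rightarrow> 'n"
  res     :: "'l \<Rightarrow> real"
  rea     :: "'l \<Rightarrow> real"
  Bsnd    :: "'l \<Rightarrow> real"
  Brcv    :: "'l \<Rightarrow> real"
  Kamp    :: "'l \<Rightarrow> real"
  Gsh     :: "'n \<Rightarrow> real"
  Bsh     :: "'n \<Rightarrow> real"
  pdem    :: "'n \<Rightarrow> real"
  qdem    :: "'n \<Rightarrow> real"
  vmin    :: "'n \<Rightarrow> real"
  vmax    :: "'n \<Rightarrow> real"
  thlmin  :: "'l \<Rightarrow> real"
  thlmax  :: "'l \<Rightarrow> real"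
  thnmin  :: "'n \<Rightarrow> real"
  thnmax  :: "'n \<Rightarrow> real"
  pmin    :: "'n \<Rightarrow> real"
  pmax    :: "'n \<Rightarrow> real"
  qmin    :: "'n \<Rightarrow> real"
  qmax    :: "'n \<Rightarrow> real"

definition Aplus :: "('n, 'l) network \<Rightarrow> 'n \<Rightarrow> 'l \<Rightarrow> real" where
  "Aplus N n l = (if n = snd_node N l then 1 else if n = rcv_node N l then -1 else 0)"

definition Aminus :: "('n, 'l) network \<Rightarrow> 'n \<Rightarrow> 'l \<Rightarrow> real" where
  "Aminus N n l = (if n = snd_node N l then 0 else if n = rcv_node N l then -1 else 0)"

record ('n, 'l) opf_point =
  op_p  :: "'n \<Rightarrow> real"
  op_q  :: "'n \<Rightarrow> real"
  op_V  :: "'n \<Rightarrow> real"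
  op_v  :: "'n \<Rightarrow> real"
  op_thn :: "'n \<Rightarrow> real"
  op_ps :: "'l \<Rightarrow> real"
  op_qs :: "'l \<Rightarrow> real"
  op_po :: "'l \<Rightarrow> real"
  op_qo :: "'l \<Rightarrow> real"
  op_thl :: "'l \<Rightarrow> real"

record ('n, 'l) soc_point =
  sp_p  :: "'n \<Rightarrow> real"
  sp_q  :: "'n \<Rightarrow> real"
  sp_V  :: "'n \<Rightarrow> real"
  sp_thn :: "'n \<Rightarrow> real"
  sp_ps :: "'l \<Rightarrow> real"
  sp_qs :: "'l \<Rightarrow> real"
  sp_po :: "'l \<Rightarrow> real"
  sp_qo :: "'l \<Rightarrow> real"
  sp_thl :: "'l \<Rightarrow> real"

definition o_feasible :: "('n, 'l) network \<Rightarrow> ('n, 'l) opf_point \<Rightarrow> bool" where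
  "o_feasible N x \<longleftrightarrow>
    (let s = snd_node N; r = rcv_node N; L = branches N;
         p = op_p x; q = op_q x; V = op_V x; v = op_v x; thn = op_thn x;
         ps = op_ps x; qs = op_qs x; po = op_po x; qo = op_qo x; thl = op_thl x
     in
     (\<forall>n\<in>nodes N.
        p n - pdem N n = (\<Sum>l\<in>L. Aplus N n l * ps l - Aminus N n l * po l) + Gsh N n * V n
      \<and> q n - qdem N n = (\<Sum>l\<in>L. Aplus N n l * qs l - Aminus N n l * qo l) - Bsh N n * V n
      \<and> V n = (v n)\<^sup>2
      \<and> vmin N n < v n \<and> v n < vmax N n
      \<and> thnmin N n < thn n \<and> thn n < thnmax N n
      \<and> pmin N n < p n \<and> p n < pmax N n
      \<and> qmin N n < q n \<and> q n < qmax N n)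
   \<and> (\<forall>l\<in>L.
        V (s l) - V (r l) = 2 * res N l * ps l + 2 * rea N l * qs l - res N l * po l - rea N l * qo l
      \<and> v (s l) * v (r l) * sin (thl l) = rea N l * ps l - res N l * qs l
      \<and> ((ps l)\<^sup>2 + (qs l - V (s l) * Bsnd N l)\<^sup>2) / V (s l) \<le> Kamp N l
      \<and> ((ps l - po l)\<^sup>2 + ((qs l - qo l) - V (r l) * Brcv N l)\<^sup>2) / V (r l) \<le> Kamp N l
      \<and> thl l = thn (s l) - thn (r l)
      \<and> po l = ((ps l)\<^sup>2 + (qs l)\<^sup>2) / V (s l) * res N l
      \<and> qo l = ((ps l)\<^sup>2 + (qs l)\<^sup>2) / V (s l) * rea N l
      \<and> thlmin N l < thl l \<and> thl l < thlmax N l))"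

definition soc_feasible :: "('n, 'l) network \<Rightarrow> ('n, 'l) soc_point \<Rightarrow> bool" where
  "soc_feasible N x \<longleftrightarrow>
    (let s = snd_node N; r = rcv_node N; L = branches N;
         p = sp_p x; q = sp_q x; V = sp_V x; thn = sp_thn x;
         ps = sp_ps x; qs = sp_qs x; po = sp_po x; qo = sp_qo x; thl = sp_thl x
     in
     (\<forall>n\<in>nodes N.
        p n - pdem N n = (\<Sum>l\<in>L. Aplus N n l * ps l - Aminus N n l * po l) + Gsh N n * V n
      \<and> q n - qdem N n = (\<Sum>l\<in>L. Aplus N n l * qs l - Aminus N n l * qo l) - Bsh N n * V n
      \<and> (vmin N n)\<^sup>2 < V n \<and> V n < (vmax N n)\<^sup>2
      \<and> thnmin N n < thn n \<and> thn n < thnmax N n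
      \<and> pmin N n < p n \<and> p n < pmax N n
      \<and> qmin N n < q n \<and> q n < qmax N n)
   \<and> (\<forall>l\<in>L.
        V (s l) - V (r l) = 2 * res N l * ps l + 2 * rea N l * qs l - res N l * po l - rea N l * qo l
      \<and> thl l = thn (s l) - thn (r l)
      \<and> thlmin N l < thl l \<and> thl l < thlmax N l
      \<comment> \<open>sending end e = s\<close>
      \<and> (Kamp N l - V (s l) * (Bsnd N l)\<^sup>2 + 2 * qs l * Bsnd N l) * rea N l \<ge> qo l
      \<and> qo l \<ge> ((ps l)\<^sup>2 + (qs l)\<^sup>2) / V (s l) * rea N l
      \<comment> \<open>receiving end e = r, with p_r = p_s - p_o, q_r = q_s - q_o\<close>
      \<and> (Kamp N l - V (r l) * (Brcv N l)\<^sup>2 + 2 * (qs l - qo l) * Brcv N l) * rea N l \<ge> qo l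
      \<and> qo l \<ge> ((ps l - po l)\<^sup>2 + (qs l - qo l)\<^sup>2) / V (r l) * rea N l
      \<and> po l * rea N l = qo l * res N l
      \<and> thl l = rea N l * ps l - res N l * qs l))"

definition recover :: "('n, 'l) network \<Rightarrow> ('n, 'l) soc_point \<Rightarrow> ('n, 'l) opf_point" where
  "recover N x =
    (let v = (\<lambda>n. sqrt (sp_V x n)) in
     \<lparr> op_p = sp_p x, op_q = sp_q x, op_V = sp_V x, op_v = v, op_thn = sp_thn x,
       op_ps = sp_ps x, op_qs = sp_qs x, op_po = sp_po x, op_qo = sp_qo x,
       op_thl = (\<lambda>l. arcsin (sp_thl x l / (v (snd_node N l) * v (rcv_node N l)))) \<rparr>)"

end

theory Submission
  imports Defs
begin

text \<open>On each branch, feasibility of the recovered point puts the recovered angle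
  t = arcsin (theta_l / (v_s v_r)) into (-theta_max, theta_max), while the sine constraint (C)
  together with the SOC identity theta_l = X_l p_s - R_l q_s gives theta_l = v_s v_r sin t.
  As sine is increasing on [0, pi/2], squaring yields
  theta_l^2 = V_s V_r sin^2 t <= V_s V_r sin^2 theta_max.\<close>

lemma abs_sin_le_sin:
  fixes t m :: real
  assumes "\<bar>t\<bar> \<le> m" "m \<le> pi / 2"
  shows "\<bar>sin t\<bar> \<le> sin m"
proof -
  have "\<bar>sin t\<bar> = sin \<bar>t\<bar>"
    using assms sin_ge_zero[of "\<bar>t\<bar>"] by (cases "t \<ge> 0") auto
  also have "\<dots> \<le> sin m"
    using assms by (intro sin_monotone_2pi_le) auto
  finally show ?thesis .
qed

lemma square_le_of_eq_sqrt_mult_sin: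
  fixes a b t m \<theta> :: real
  assumes "0 \<le> a" "0 \<le> b" "\<theta> = sqrt a * sqrt b * sin t"
    and "\<bar>t\<bar> \<le> m" "m \<le> pi / 2"
  shows "\<theta>\<^sup>2 \<le> a * b * (sin m)\<^sup>2"
proof -
  have "(sin t)\<^sup>2 \<le> (sin m)\<^sup>2"
    using abs_sin_le_sin[OF assms(4,5)] by (metis abs_ge_zero order.trans power2_abs power_mono)
  then have "a * b * (sin t)\<^sup>2 \<le> a * b * (sin m)\<^sup>2"
    using assms(1,2) by (intro mult_left_mono) auto
  then show ?thesis
    using assms(1,2,3) by (simp add: power_mult_distrib)
qed

theorem theorem2:
  fixes N :: "('n, 'l) network" and x :: "('n, 'l) soc_point"
  assumes "finite (nodes N)" and "finite (branches N)"
    and "\<forall>l\<in>branches N. snd_node N l \<in> nodes N \<and> rcv_node N l \<in> nodes N"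
    and "\<forall>l\<in>branches N. - (pi / 2) \<le> thlmin N l \<and> thlmax N l \<le> pi / 2"
    and "\<forall>l\<in>branches N. thlmin N l = - thlmax N l"
    and "soc_feasible N x"
    and "o_feasible N (recover N x)"
  shows "\<forall>l\<in>branches N.
           sp_V x (snd_node N l) * sp_V x (rcv_node N l) * (sin (thlmax N l))\<^sup>2 \<ge> (sp_thl x l)\<^sup>2"
proof
  fix l assume l: "l \<in> branches N"
  define Vs Vr where "Vs = sp_V x (snd_node N l)" and "Vr = sp_V x (rcv_node N l)"
  define t where "t = arcsin (sp_thl x l / (sqrt Vs * sqrt Vr))"
  have V_pos: "0 < Vs" "0 < Vr"
    using assms(3,6) l unfolding soc_feasible_def Let_def Vs_def Vr_def
    by (meson le_less_trans zero_le_power2)+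
  have thl_soc: "sp_thl x l = rea N l * sp_ps x l - res N l * sp_qs x l"
    using assms(6) l unfolding soc_feasible_def Let_def by auto
  have sin_rec: "sqrt Vs * sqrt Vr * sin t = rea N l * sp_ps x l - res N l * sp_qs x l"
    and t_range: "thlmin N l < t" "t < thlmax N l"
    using assms(7) l unfolding o_feasible_def recover_def Let_def Vs_def Vr_def t_def by auto
  have "\<bar>t\<bar> \<le> thlmax N l"
    using t_range assms(5) l by auto
  moreover have "thlmax N l \<le> pi / 2"
    using assms(4) l by blast
  ultimately show "Vs * Vr * (sin (thlmax N l))\<^sup>2 \<ge> (sp_thl x l)\<^sup>2"
    using square_le_of_eq_sqrt_mult_sin[of Vs Vr "sp_thl x l" t "thlmax N l"] V_pos thl_soc sin_rec
    by simp
qed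

end
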